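(* Let $\mathbb P$ be the law of a stationary simple point process on $\mathbb R^d$ with finite positive intensity $m$ and $\mathbb P(\xi\ne\emptyset)=1$. Suppose Condition $C(\alpha)$ holds for some $\alpha>0$ and $\rho_\gamma<+\infty$ for some $\gamma>1$. Then there is a constant $C_0>0$ such that $$\sup_{x\in\mathbb R^d}\mathbb P_0\big(\xi(\Lambda_\ell(x))=0\big)\le C_0\ell^{-\alpha/\gamma'}\qquad\forall\ell>0,$$ where $\gamma'=\frac{\gamma}{\gamma-1}$.
   Context: $\mathcal N$ = locally finite subsets of $\mathbb R^d$, identified with counting measures ($\xi(A)=\#(\xi\cap A)$); $\tau_x\xi=\xi-x$; stationarity: $\mathbb P(\tau_xA)=\mathbb P(A)$; $m=\mathbb E[\xi([0,1]^d)]$. $\Lambda_\ell(x)=x+[-\ell,\ell]^d$, $\Lambda_\ell=\Lambda_\ell(0)$. $\rho_\gamma=\mathbb E[\xi([0,1]^d)^\gamma]$. Palm distribution $\mathbb P_0(A)=\frac1m\int d\mathbb P(\xi)\sum_{x\in\xi\cap[0,1]^d}\mathbf 1_A(\tau_x\xi)$. Condition $C(\alpha)$: $\exists\kappa>0$ with $\mathbb P(\xi(\Lambda_\ell)=0)\le\kappa\ell^{-\alpha}$ for all $\ell\ge1$. *)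

theory Defs
  imports "HOL-Probability.Probability"
begin

text \<open>Point configurations in R^d are subsets of real^'n ('n finite, d = CARD('n)).
  A configuration is identified with its counting measure: xi(A) = card (xi \<inter> A).\<close>

definition cnt :: "(real^'n::finite) set \<Rightarrow> (real^'n) set \<Rightarrow> nat" where
  "cnt \<xi> A = card (\<xi> \<inter> A)"

definition loc_finite_configs :: "(real^'n::finite) set set" where
  "loc_finite_configs = {\<xi>. \<forall>K. compact K \<longrightarrow> finite (\<xi> \<inter> K)}"

definition config_space :: "(real^'n::finite) set measure" where
  "config_space = sigma loc_finite_configs
     {{\<xi> \<in> loc_finite_configs. cnt \<xi> B = k} | B k. B \<in> sets borel \<and> bounded B}"

definition shift :: "real^'n::finite \<Rightarrow> (real^'n) set \<Rightarrow> (real^'n) set" where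
  "shift x \<xi> = (\<lambda>y. y - x) ` \<xi>"

definition unit_cube :: "(real^'n::finite) set" where
  "unit_cube = cbox 0 1"

definition Lambda :: "real \<Rightarrow> real^'n::finite \<Rightarrow> (real^'n) set" where
  "Lambda l x = cbox (x - vec l) (x + vec l)"

definition stationary :: "(real^'n::finite) set measure \<Rightarrow> bool" where
  "stationary P \<longleftrightarrow> (\<forall>x. \<forall>A \<in> sets P. measure P (shift x ` A) = measure P A)"

definition intensity :: "(real^'n::finite) set measure \<Rightarrow> ennreal" where
  "intensity P = (\<integral>\<^sup>+ \<xi>. ennreal (real (cnt \<xi> unit_cube)) \<partial>P)"

definition moment :: "(real^'n::finite) set measure \<Rightarrow> real \<Rightarrow> ennreal" where
  "moment P \<gamma> = (\<integral>\<^sup>+ \<xi>. ennreal (real (cnt \<xi> unit_cube) powr \<gamma>) \<partial>P)"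

definition palm :: "(real^'n::finite) set measure \<Rightarrow> (real^'n) set set \<Rightarrow> real" where
  "palm P A = enn2real (\<integral>\<^sup>+ \<xi>. ennreal (\<Sum>x \<in> \<xi> \<inter> unit_cube. indicator A (shift x \<xi>)) \<partial>P)
              / enn2real (intensity P)"

definition cond_C :: "(real^'n::finite) set measure \<Rightarrow> real \<Rightarrow> bool" where
  "cond_C P \<alpha> \<longleftrightarrow> (\<exists>\<kappa>>0. \<forall>l\<ge>1.
      measure P {\<xi> \<in> space P. cnt \<xi> (Lambda l 0) = 0} \<le> \<kappa> * l powr (-\<alpha>))"

end

theory Submission imports Defs begin

text \<open>For y in the unit cube the box \<open>\<Lambda>_l(x + y)\<close> contains the fixed box
  \<open>\<Lambda>_{l-1/2}(x + 1/2)\<close>. Hence the Palm numerator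
  \<open>E[\<Sum>_{y \<in> \<xi> \<inter> [0,1]^d} 1{\<xi>(\<Lambda>_l(x + y)) = 0}]\<close> is at most \<open>E[N 1_E]\<close>, where
  \<open>N = \<xi>([0,1]^d)\<close> and E is the event that the fixed box is empty; by stationarity and
  \<open>C(\<alpha>)\<close>, \<open>P(E) \<le> \<kappa> (l - 1/2)^{-\<alpha>}\<close>. Splitting N at the level \<open>K = P(E)^{-1/\<gamma>}\<close>,
  i.e. \<open>N 1_E \<le> K 1_E + K^{1-\<gamma>} N^\<gamma>\<close>, gives \<open>E[N 1_E] \<le> (1 + \<rho>_\<gamma>) P(E)^{1/\<gamma>'}\<close> in place
  of Hoelder's inequality. For \<open>l < 3/2\<close> the trivial bound \<open>P_0 \<le> 1\<close> suffices.\<close>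

lemma space_config_space: "space (config_space :: (real^'n::finite) set measure) = loc_finite_configs"
  unfolding config_space_def by (rule space_measure_of) auto

lemma cnt_eq_in_sets:
  fixes P :: "(real^'n::finite) set measure"
  assumes "sets P = sets config_space" "B \<in> sets borel" "bounded B"
  shows "{\<xi> \<in> space P. cnt \<xi> B = k} \<in> sets P"
proof -
  have "sets (config_space :: (real^'n) set measure) = sigma_sets loc_finite_configs
     {{\<xi> \<in> loc_finite_configs. cnt \<xi> B = k} | B k. B \<in> sets borel \<and> bounded B}"
    unfolding config_space_def by (rule sets_measure_of) auto
  then show ?thesis
    using assms sets_eq_imp_space_eq[OF assms(1)] by (auto simp: space_config_space)
qed

lemma measurable_cnt:
  fixes P :: "(real^'n::finite) set measure"
  assumes "sets P = sets config_space" "B \<in> sets borel" "bounded B"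
  shows "(\<lambda>\<xi>. real (cnt \<xi> B)) \<in> borel_measurable P"
proof -
  have "(\<lambda>\<xi>. cnt \<xi> B) \<in> measurable P (count_space UNIV)"
    unfolding measurable_count_space_eq2_countable
    using cnt_eq_in_sets[OF assms] by (auto simp: vimage_def Int_def conj_commute)
  then show ?thesis by (rule measurable_compose) simp
qed

lemma cnt_shift_Lambda:
  fixes z :: "real^'n::finite"
  shows "cnt (shift z \<xi>) (Lambda r y) = cnt \<xi> (Lambda r (y + z))"
proof -
  have "shift z \<xi> \<inter> Lambda r y = (\<lambda>w. w - z) ` (\<xi> \<inter> Lambda r (y + z))"
    unfolding shift_def Lambda_def by (force simp: mem_box_cart algebra_simps)
  moreover have "inj (\<lambda>w::real^'n. w - z)" by (auto intro: injI)
  ultimately show ?thesis unfolding cnt_def by (simp add: card_image inj_on_subset)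
qed

lemma shift_in_loc_finite_configs:
  fixes \<xi> :: "(real^'n::finite) set"
  assumes "\<xi> \<in> loc_finite_configs"
  shows "shift z \<xi> \<in> loc_finite_configs"
  unfolding loc_finite_configs_def
proof (intro CollectI allI impI)
  fix K :: "(real^'n) set" assume "compact K"
  have "shift z \<xi> \<inter> K = (\<lambda>y. y - z) ` (\<xi> \<inter> (+) z ` K)"
    unfolding shift_def by (auto simp: image_iff) (metis add.commute diff_add_cancel)
  moreover have "finite (\<xi> \<inter> (+) z ` K)"
    using assms compact_translation[OF \<open>compact K\<close>] unfolding loc_finite_configs_def by blast
  ultimately show "finite (shift z \<xi> \<inter> K)" by simp
qed

lemma shift_uminus_shift [simp]: "shift (- z) (shift z \<xi>) = \<xi>"
  unfolding shift_def by (auto simp: image_iff)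

lemma stationary_measure_cnt_Lambda:
  fixes P :: "(real^'n::finite) set measure"
  assumes "sets P = sets config_space" "stationary P"
  shows "measure P {\<xi> \<in> space P. cnt \<xi> (Lambda r z) = k}
       = measure P {\<xi> \<in> space P. cnt \<xi> (Lambda r 0) = k}"
proof -
  let ?E = "\<lambda>z. {\<xi> \<in> space P. cnt \<xi> (Lambda r z) = k}"
  have space: "space P = loc_finite_configs"
    using sets_eq_imp_space_eq[OF assms(1)] by (simp add: space_config_space)
  have "?E z \<subseteq> shift (- z) ` ?E 0"
  proof
    fix \<xi> assume "\<xi> \<in> ?E z"
    then have "shift z \<xi> \<in> ?E 0"
      using space shift_in_loc_finite_configs[of \<xi> z] by (simp add: cnt_shift_Lambda)
    then have "shift (- z) (shift z \<xi>) \<in> shift (- z) ` ?E 0" by (rule imageI)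
    then show "\<xi> \<in> shift (- z) ` ?E 0" by simp
  qed
  moreover have "shift (- z) ` ?E 0 \<subseteq> ?E z"
    using space shift_in_loc_finite_configs[of _ "- z"] by (auto simp: cnt_shift_Lambda)
  ultimately have "?E z = shift (- z) ` ?E 0" by (rule equalityI)
  moreover have "?E 0 \<in> sets P"
    by (rule cnt_eq_in_sets[OF assms(1)]) (auto simp: Lambda_def)
  then have "measure P (shift (- z) ` ?E 0) = measure P (?E 0)"
    using assms(2) unfolding stationary_def by blast
  ultimately show ?thesis by simp
qed

lemma Lambda_subset_Lambda_shift:
  fixes x y :: "real^'n::finite"
  assumes "y \<in> unit_cube"
  shows "Lambda (l - 1/2) (x + vec (1/2)) \<subseteq> Lambda l (x + y)"
proof
  fix w assume "w \<in> Lambda (l - 1/2) (x + vec (1/2))"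
  then have w: "x$i + 1 - l \<le> w$i \<and> w$i \<le> x$i + l" for i
    unfolding Lambda_def mem_box_cart by (auto simp: algebra_simps)
  have y: "0 \<le> y$i \<and> y$i \<le> 1" for i
    using assms unfolding unit_cube_def by (auto simp: mem_box_cart)
  have "x$i + y$i - l \<le> w$i \<and> w$i \<le> x$i + y$i + l" for i
    using w[of i] y[of i] by linarith
  then show "w \<in> Lambda l (x + y)"
    unfolding Lambda_def mem_box_cart by (simp add: algebra_simps)
qed

lemma cnt_Lambda_eq_0_if_shift:
  assumes "\<xi> \<in> loc_finite_configs" "y \<in> unit_cube" "cnt (shift y \<xi>) (Lambda l x) = 0"
  shows "cnt \<xi> (Lambda (l - 1/2) (x + vec (1/2))) = 0"
proof -
  have "finite (\<xi> \<inter> Lambda l (x + y))"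
    using assms(1) compact_cbox unfolding loc_finite_configs_def Lambda_def by blast
  moreover have "card (\<xi> \<inter> Lambda l (x + y)) = 0"
    using assms(3) by (simp add: cnt_shift_Lambda flip: cnt_def)
  ultimately have "\<xi> \<inter> Lambda l (x + y) = {}" by simp
  then have "\<xi> \<inter> Lambda (l - 1/2) (x + vec (1/2)) = {}"
    using Lambda_subset_Lambda_shift[OF assms(2), of l x] by blast
  then show ?thesis by (simp add: cnt_def)
qed

lemma sum_indicator_le_cnt:
  "(\<Sum>y \<in> \<xi> \<inter> unit_cube. indicator A (shift y \<xi>) :: real) \<le> real (cnt \<xi> unit_cube)"
  using sum_bounded_above[of "\<xi> \<inter> unit_cube" "\<lambda>y. indicator A (shift y \<xi>) :: real" 1]
  unfolding cnt_def by (simp add: indicator_def)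

lemma sum_indicator_void_le:
  assumes "\<xi> \<in> loc_finite_configs"
  shows "(\<Sum>y \<in> \<xi> \<inter> unit_cube. indicator {\<eta>. cnt \<eta> (Lambda l x) = 0} (shift y \<xi>) :: real)
     \<le> real (cnt \<xi> unit_cube) * indicator {\<eta>. cnt \<eta> (Lambda (l - 1/2) (x + vec (1/2))) = 0} \<xi>"
proof (cases "cnt \<xi> (Lambda (l - 1/2) (x + vec (1/2))) = 0")
  case True
  then show ?thesis using sum_indicator_le_cnt by simp
next
  case False
  then have "indicator {\<eta>. cnt \<eta> (Lambda l x) = 0} (shift y \<xi>) = (0::real)"
    if "y \<in> \<xi> \<inter> unit_cube" for y
    using cnt_Lambda_eq_0_if_shift[OF assms, of y l x] that by (auto simp: indicator_def)
  then show ?thesis using False by simp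
qed

lemma le_add_powr_truncation:
  fixes N K \<gamma> :: real
  assumes "N \<ge> 0" "K > 0" "\<gamma> \<ge> 1"
  shows "N \<le> K + K powr (1 - \<gamma>) * N powr \<gamma>"
proof (cases "N \<le> K")
  case True
  then show ?thesis using assms by (simp add: add_increasing2)
next
  case False
  then have "N powr (1 - \<gamma>) \<le> K powr (1 - \<gamma>)"
    using assms by (intro powr_mono2') auto
  then have "N powr \<gamma> * N powr (1 - \<gamma>) \<le> N powr \<gamma> * K powr (1 - \<gamma>)"
    by (simp add: mult_left_mono)
  moreover have "N powr \<gamma> * N powr (1 - \<gamma>) = N"
    using False assms by (simp add: powr_add[symmetric])
  ultimately show ?thesis using assms by (simp add: mult.commute add_increasing)
qed

lemma nn_integral_mult_indicator_le_moment:
  fixes f :: "'a \<Rightarrow> real"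
  assumes f: "f \<in> borel_measurable M" "\<And>x. x \<in> space M \<Longrightarrow> f x \<ge> 0"
    and E: "E \<in> sets M" "emeasure M E \<le> ennreal q" and "q > 0" "\<gamma> > 1"
  shows "(\<integral>\<^sup>+ x. ennreal (f x * indicator E x) \<partial>M)
     \<le> ennreal (q powr (1 - 1/\<gamma>)) * (1 + (\<integral>\<^sup>+ x. ennreal (f x powr \<gamma>) \<partial>M))"
proof -
  define K where "K = q powr (- 1/\<gamma>)"
  have "K > 0" using \<open>q > 0\<close> by (simp add: K_def)
  have "K * q = q powr (- 1/\<gamma>) * q powr 1" using \<open>q > 0\<close> by (simp add: K_def)
  also have "\<dots> = q powr (- 1/\<gamma> + 1)" by (rule powr_add[symmetric])
  also have "- 1/\<gamma> + 1 = 1 - 1/\<gamma>" by simp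
  finally have K_q: "K * q = q powr (1 - 1/\<gamma>)" .
  have "K powr (1 - \<gamma>) = q powr ((- 1/\<gamma>) * (1 - \<gamma>))" by (simp add: K_def powr_powr)
  also have "(- 1/\<gamma>) * (1 - \<gamma>) = 1 - 1/\<gamma>" using \<open>\<gamma> > 1\<close> by (simp add: field_simps)
  finally have K_pow: "K powr (1 - \<gamma>) = q powr (1 - 1/\<gamma>)" .
  have "ennreal (f x * indicator E x)
      \<le> ennreal K * indicator E x + ennreal (K powr (1 - \<gamma>)) * ennreal (f x powr \<gamma>)"
    if "x \<in> space M" for x
  proof -
    have "ennreal (f x * indicator E x) \<le> ennreal (K * indicator E x + K powr (1 - \<gamma>) * f x powr \<gamma>)"
      using le_add_powr_truncation[of "f x" K \<gamma>] f(2)[OF that] \<open>K > 0\<close> \<open>\<gamma> > 1\<close>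
      by (intro ennreal_leI) (simp add: indicator_def)
    also have "\<dots> = ennreal K * indicator E x + ennreal (K powr (1 - \<gamma>)) * ennreal (f x powr \<gamma>)"
      using \<open>K > 0\<close> by (simp add: ennreal_plus ennreal_mult indicator_def)
    finally show ?thesis .
  qed
  then have "(\<integral>\<^sup>+ x. ennreal (f x * indicator E x) \<partial>M)
      \<le> (\<integral>\<^sup>+ x. ennreal K * indicator E x + ennreal (K powr (1 - \<gamma>)) * ennreal (f x powr \<gamma>) \<partial>M)"
    by (rule nn_integral_mono)
  also have "\<dots> = ennreal K * emeasure M E + ennreal (K powr (1 - \<gamma>)) * (\<integral>\<^sup>+ x. ennreal (f x powr \<gamma>) \<partial>M)"
    using f(1) E(1) by (simp add: nn_integral_add nn_integral_cmult nn_integral_cmult_indicator)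
  also have "\<dots> \<le> ennreal (K * q) + ennreal (K powr (1 - \<gamma>)) * (\<integral>\<^sup>+ x. ennreal (f x powr \<gamma>) \<partial>M)"
    using E(2) \<open>K > 0\<close> \<open>q > 0\<close> by (intro add_right_mono) (simp add: ennreal_mult mult_left_mono)
  finally show ?thesis by (simp add: K_q K_pow distrib_left)
qed

lemma palm_le_1:
  assumes "0 < intensity P" "intensity P < \<infinity>"
  shows "palm P A \<le> 1"
proof -
  have "(\<integral>\<^sup>+ \<xi>. ennreal (\<Sum>y \<in> \<xi> \<inter> unit_cube. indicator A (shift y \<xi>)) \<partial>P) \<le> intensity P"
    unfolding intensity_def by (intro nn_integral_mono ennreal_leI sum_indicator_le_cnt)
  then show ?thesis
    using assms unfolding palm_def by (simp add: enn2real_positive_iff enn2real_mono)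
qed

lemma palm_void_Lambda_le:
  fixes P :: "(real^'n::finite) set measure"
  assumes "prob_space P" "sets P = sets config_space" "stationary P"
    and "0 < intensity P" "intensity P < \<infinity>" "\<gamma> > 1" "moment P \<gamma> < \<infinity>"
    and "q > 0" "measure P {\<xi> \<in> space P. cnt \<xi> (Lambda (l - 1/2) 0) = 0} \<le> q"
  shows "palm P {\<xi>. cnt \<xi> (Lambda l x) = 0}
      \<le> (1 + enn2real (moment P \<gamma>)) / enn2real (intensity P) * q powr (1 - 1/\<gamma>)"
proof -
  interpret prob_space P by fact
  let ?N = "\<lambda>\<xi>. real (cnt \<xi> unit_cube)"
  let ?S = "\<lambda>\<xi>. \<Sum>y \<in> \<xi> \<inter> unit_cube. indicator {\<eta>. cnt \<eta> (Lambda l x) = 0} (shift y \<xi>) :: real"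
  define E where "E = {\<xi> \<in> space P. cnt \<xi> (Lambda (l - 1/2) (x + vec (1/2))) = 0}"
  have space: "space P = loc_finite_configs"
    using sets_eq_imp_space_eq[OF assms(2)] by (simp add: space_config_space)
  have E: "E \<in> sets P"
    unfolding E_def by (rule cnt_eq_in_sets[OF assms(2)]) (auto simp: Lambda_def)
  have "emeasure P E \<le> ennreal q"
    using stationary_measure_cnt_Lambda[OF assms(2,3), of "l - 1/2" "x + vec (1/2)" 0] assms(9)
    by (simp add: E_def emeasure_eq_measure ennreal_leI)
  moreover have "?N \<in> borel_measurable P"
    by (rule measurable_cnt[OF assms(2)]) (auto simp: unit_cube_def)
  ultimately have "(\<integral>\<^sup>+ \<xi>. ennreal (?N \<xi> * indicator E \<xi>) \<partial>P)
      \<le> ennreal (q powr (1 - 1/\<gamma>)) * (1 + moment P \<gamma>)"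
    unfolding moment_def using E assms(6,8) by (intro nn_integral_mult_indicator_le_moment) auto
  moreover have "(\<integral>\<^sup>+ \<xi>. ennreal (?S \<xi>) \<partial>P) \<le> (\<integral>\<^sup>+ \<xi>. ennreal (?N \<xi> * indicator E \<xi>) \<partial>P)"
  proof (intro nn_integral_mono ennreal_leI)
    fix \<xi> assume "\<xi> \<in> space P"
    then have "indicator E \<xi> = (indicator {\<eta>. cnt \<eta> (Lambda (l - 1/2) (x + vec (1/2))) = 0} \<xi> :: real)"
      by (simp add: E_def indicator_def)
    then show "?S \<xi> \<le> ?N \<xi> * indicator E \<xi>"
      using sum_indicator_void_le[of \<xi> l x] \<open>\<xi> \<in> space P\<close> space by simp
  qed
  ultimately have "enn2real (\<integral>\<^sup>+ \<xi>. ennreal (?S \<xi>) \<partial>P) \<le> q powr (1 - 1/\<gamma>) * (1 + enn2real (moment P \<gamma>))"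
    using assms(7) by (intro enn2real_leI) (auto simp: ennreal_enn2real_if ennreal_mult)
  then show ?thesis
    using assms(4,5) unfolding palm_def
    by (simp add: enn2real_positive_iff divide_right_mono mult.commute)
qed

lemma powr_shifted_le:
  fixes l a :: real
  assumes "l \<ge> 3/2" "a \<ge> 0"
  shows "(l - 1/2) powr (- a) \<le> (3/2) powr a * l powr (- a)"
proof -
  have "(l - 1/2) powr (- a) \<le> (2/3 * l) powr (- a)"
    using assms by (intro powr_mono2') auto
  also have "\<dots> = (3/2) powr a * l powr (- a)"
    using assms by (simp add: powr_mult powr_minus_divide powr_divide)
  finally show ?thesis .
qed

lemma powr_decay_extend_to_pos:
  fixes f :: "real \<Rightarrow> 'a \<Rightarrow> real"
  assumes "a \<ge> 0" "l\<^sub>0 > 0"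
    and "\<And>l x. l > 0 \<Longrightarrow> f l x \<le> 1"
    and "\<And>l x. l \<ge> l\<^sub>0 \<Longrightarrow> f l x \<le> c * l powr (- a)"
  shows "\<exists>C>0. \<forall>l>0. \<forall>x. f l x \<le> C * l powr (- a)"
proof (intro exI conjI allI impI)
  show "l\<^sub>0 powr a + \<bar>c\<bar> > 0" using assms by (simp add: add_pos_nonneg)
  fix l :: real and x assume "l > 0"
  show "f l x \<le> (l\<^sub>0 powr a + \<bar>c\<bar>) * l powr (- a)"
  proof (cases "l < l\<^sub>0")
    case True
    have "1 \<le> (l\<^sub>0 / l) powr a"
      using True \<open>l > 0\<close> assms(1) by (intro ge_one_powr_ge_zero) auto
    also have "\<dots> = l\<^sub>0 powr a * l powr (- a)"
      using \<open>l > 0\<close> assms(2) by (simp add: powr_divide powr_minus_divide)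
    also have "\<dots> \<le> (l\<^sub>0 powr a + \<bar>c\<bar>) * l powr (- a)"
      by (simp add: mult_right_mono)
    finally show ?thesis using assms(3)[of l x] \<open>l > 0\<close> by linarith
  next
    case False
    then have "f l x \<le> c * l powr (- a)" using assms(4) by simp
    also have "\<dots> \<le> (l\<^sub>0 powr a + \<bar>c\<bar>) * l powr (- a)"
      by (intro mult_right_mono) (auto intro: add_increasing)
    finally show ?thesis .
  qed
qed

theorem lemma10p3:
  fixes P :: "(real^'n::finite) set measure" and \<alpha> \<gamma> :: real
  assumes "prob_space P"
    and "sets P = sets config_space"
    and "stationary P"
    and "0 < intensity P" and "intensity P < \<infinity>"
    and "prob_space.prob P {\<xi> \<in> space P. \<xi> \<noteq> {}} = 1"
    and "\<alpha> > 0" and "cond_C P \<alpha>"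
    and "\<gamma> > 1" and "moment P \<gamma> < \<infinity>"
  shows "\<exists>C0>0. \<forall>l>0. \<forall>x. palm P {\<xi>. cnt \<xi> (Lambda l x) = 0}
            \<le> C0 * l powr (- \<alpha> / (\<gamma> / (\<gamma> - 1)))"
proof -
  obtain \<kappa> where "\<kappa> > 0" and \<kappa>: "\<And>r. r \<ge> 1 \<Longrightarrow>
      measure P {\<xi> \<in> space P. cnt \<xi> (Lambda r 0) = 0} \<le> \<kappa> * r powr (- \<alpha>)"
    using assms(8) unfolding cond_C_def by blast
  define \<beta> where "\<beta> = 1 - 1/\<gamma>"
  have "\<beta> > 0" using assms(9) by (simp add: \<beta>_def)
  have exponent: "- \<alpha> / (\<gamma> / (\<gamma> - 1)) = - (\<alpha> * \<beta>)"
    using assms(9) by (simp add: \<beta>_def field_simps)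
  define c where "c = (1 + enn2real (moment P \<gamma>)) / enn2real (intensity P) * \<kappa> powr \<beta>"
  have "c \<ge> 0" by (simp add: c_def)
  have large: "palm P {\<xi>. cnt \<xi> (Lambda l x) = 0} \<le> c * (3/2) powr (\<alpha> * \<beta>) * l powr (- (\<alpha> * \<beta>))"
    if "l \<ge> 3/2" for l x
  proof -
    have "palm P {\<xi>. cnt \<xi> (Lambda l x) = 0} \<le> c * (l - 1/2) powr (- (\<alpha> * \<beta>))"
      using palm_void_Lambda_le[OF assms(1-5,9,10), of "\<kappa> * (l - 1/2) powr (- \<alpha>)" l x]
        \<kappa>[of "l - 1/2"] that \<open>\<kappa> > 0\<close>
      by (simp add: c_def \<beta>_def powr_mult powr_powr)
    also have "\<dots> \<le> c * ((3/2) powr (\<alpha> * \<beta>) * l powr (- (\<alpha> * \<beta>)))"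
      using powr_shifted_le[OF that] \<open>c \<ge> 0\<close> \<open>\<beta> > 0\<close> assms(7) by (simp add: mult_left_mono)
    finally show ?thesis by (simp add: mult.assoc)
  qed
  show ?thesis
    unfolding exponent
    using palm_le_1[OF assms(4,5)] large \<open>\<alpha> > 0\<close> \<open>\<beta> > 0\<close>
    by (intro powr_decay_extend_to_pos[of _ "3/2"]) auto
qed

end
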